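(* Let $\lambda$ be an infinite cardinal and $k\ge 2$. A mutually algebraic subset $Y\subseteq\lambda^k$ is monadically definable if and only if $Y\setminus\Delta_k$ is finite, where $\Delta_k=\{(a,\dots,a)\in\lambda^k:a\in\lambda\}$.
   Context: $Y\subseteq\lambda^k$ is mutually algebraic if there is an integer $m$ such that for every $a\in\lambda$ the set $\{\bar a\in Y: a \text{ is a coordinate of } \bar a\}$ has size at most $m$. $Y\subseteq\lambda^k$ is monadically definable if it is definable (with parameters) in some structure $(\lambda,U_1,\dots,U_n)$ with $U_i$ unary predicates. *)

theory Defs
  imports Main
begin

datatype 'a trm = Var nat | Par 'a

datatype 'a fm =
    Eq "'a trm" "'a trm"
  | Pred nat "'a trm"
  | Neg "'a fm"
  | Conj "'a fm" "'a fm"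
  | Ex nat "'a fm"

fun tval :: "(nat \<Rightarrow> 'a) \<Rightarrow> 'a trm \<Rightarrow> 'a" where
  "tval e (Var i) = e i"
| "tval e (Par a) = a"

fun tfv :: "'a trm \<Rightarrow> nat set" where
  "tfv (Var i) = {i}"
| "tfv (Par a) = {}"

fun fv :: "'a fm \<Rightarrow> nat set" where
  "fv (Eq s t) = tfv s \<union> tfv t"
| "fv (Pred p t) = tfv t"
| "fv (Neg f) = fv f"
| "fv (Conj f g) = fv f \<union> fv g"
| "fv (Ex x f) = fv f - {x}"

fun sat :: "(nat \<Rightarrow> 'a set) \<Rightarrow> (nat \<Rightarrow> 'a) \<Rightarrow> 'a fm \<Rightarrow> bool" where
  "sat U e (Eq s t) = (tval e s = tval e t)"
| "sat U e (Pred p t) = (tval e t \<in> U p)"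
| "sat U e (Neg f) = (\<not> sat U e f)"
| "sat U e (Conj f g) = (sat U e f \<and> sat U e g)"
| "sat U e (Ex x f) = (\<exists>a. sat U (e(x := a)) f)"

text \<open>Tuples in lambda^k are lists of length k.\<close>
definition tuples :: "nat \<Rightarrow> 'a list set" where
  "tuples k = {xs. length xs = k}"

definition diag :: "nat \<Rightarrow> 'a list set" where
  "diag k = {replicate k a | a. True}"

definition mutually_algebraic :: "'a list set \<Rightarrow> bool" where
  "mutually_algebraic Y \<longleftrightarrow>
     (\<exists>m::nat. \<forall>a. finite {t \<in> Y. a \<in> set t} \<and> card {t \<in> Y. a \<in> set t} \<le> m)"

text \<open>Y is definable (with parameters) in some expansion of the universe by finitely
many unary predicates: a formula mentions only finitely many predicate symbols, so
allowing a countable family U is equivalent.\<close>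
definition monadically_definable :: "nat \<Rightarrow> 'a list set \<Rightarrow> bool" where
  "monadically_definable k Y \<longleftrightarrow>
     (\<exists>(U :: nat \<Rightarrow> 'a set) (\<phi> :: 'a fm). fv \<phi> \<subseteq> {..<k} \<and>
        Y = {xs \<in> tuples k. sat U (\<lambda>i. xs ! i) \<phi>})"

end

theory Submission
  imports Defs "HOL-Combinatorics.Transposition"
begin

text \<open>A formula \<open>\<phi>\<close> with parameters sees an element only through its membership in the
finitely many predicates of \<open>\<phi>\<close>, so transposing two elements of the same such type that
are not parameters preserves the defined set. Outside a finite set \<open>F\<close> (the parameters
and the elements of finite type) every type is infinite. Hence if a non-constant tuple of
\<open>Y\<close> had a coordinate \<open>a \<notin> F\<close>, replacing \<open>a\<close> by the infinitely many elements of its type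
would put a fixed other coordinate \<open>b\<close> into infinitely many tuples of \<open>Y\<close>, contradicting
mutual algebraicity; so \<open>Y - diag k \<subseteq> F\<^sup>k\<close> is finite. Conversely, a finite set of
tuples is definable with parameters, and the diagonal part of \<open>Y\<close> is defined by one
predicate.\<close>

fun tparams :: "'a trm \<Rightarrow> 'a set" where
  "tparams (Var i) = {}"
| "tparams (Par a) = {a}"

fun params :: "'a fm \<Rightarrow> 'a set" where
  "params (Eq s t) = tparams s \<union> tparams t"
| "params (Pred p t) = tparams t"
| "params (Neg \<phi>) = params \<phi>"
| "params (Conj \<phi> \<psi>) = params \<phi> \<union> params \<psi>"
| "params (Ex x \<phi>) = params \<phi>"

fun preds :: "'a fm \<Rightarrow> nat set" where
  "preds (Eq s t) = {}"
| "preds (Pred p t) = {p}"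
| "preds (Neg \<phi>) = preds \<phi>"
| "preds (Conj \<phi> \<psi>) = preds \<phi> \<union> preds \<psi>"
| "preds (Ex x \<phi>) = preds \<phi>"

lemma finite_tparams: "finite (tparams t)"
  by (cases t) auto

lemma finite_params: "finite (params \<phi>)"
  by (induction \<phi>) (auto simp: finite_tparams)

lemma finite_preds: "finite (preds \<phi>)"
  by (induction \<phi>) auto

lemma tval_cong: "(\<And>i. i \<in> tfv t \<Longrightarrow> e i = e' i) \<Longrightarrow> tval e t = tval e' t"
  by (cases t) auto

lemma sat_cong: "(\<And>i. i \<in> fv \<phi> \<Longrightarrow> e i = e' i) \<Longrightarrow> sat U e \<phi> = sat U e' \<phi>"
proof (induction \<phi> arbitrary: e e')
  case (Eq s t)
  have "tval e s = tval e' s" "tval e t = tval e' t"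
    using Eq.prems by (auto intro: tval_cong)
  then show ?case by simp
next
  case (Pred p t)
  have "tval e t = tval e' t" using Pred.prems by (auto intro: tval_cong)
  then show ?case by simp
next
  case (Neg \<phi>)
  have "sat U e \<phi> = sat U e' \<phi>" using Neg.prems by (intro Neg.IH) auto
  then show ?case by simp
next
  case (Conj \<phi> \<psi>)
  have "sat U e \<phi> = sat U e' \<phi>" using Conj.prems by (intro Conj.IH(1)) auto
  moreover have "sat U e \<psi> = sat U e' \<psi>" using Conj.prems by (intro Conj.IH(2)) auto
  ultimately show ?case by simp
next
  case (Ex x \<phi>)
  have "sat U (e(x := a)) \<phi> = sat U (e'(x := a)) \<phi>" for a
    using Ex.prems by (intro Ex.IH) auto
  then show ?case by simp
qed

lemma tval_comp: "(\<And>a. a \<in> tparams t \<Longrightarrow> \<pi> a = a) \<Longrightarrow> tval (\<pi> \<circ> e) t = \<pi> (tval e t)"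
  by (cases t) auto

lemma sat_comp_bij:
  assumes "bij \<pi>"
    and "\<And>a. a \<in> params \<phi> \<Longrightarrow> \<pi> a = a"
    and "\<And>p x. p \<in> preds \<phi> \<Longrightarrow> \<pi> x \<in> U p \<longleftrightarrow> x \<in> U p"
  shows "sat U (\<pi> \<circ> e) \<phi> = sat U e \<phi>"
  using assms(2,3)
proof (induction \<phi> arbitrary: e)
  case (Eq s t)
  then have "tval (\<pi> \<circ> e) s = \<pi> (tval e s)" "tval (\<pi> \<circ> e) t = \<pi> (tval e t)"
    by (auto intro: tval_comp)
  then show ?case using bij_is_inj[OF assms(1)] by (metis sat.simps(1) inj_eq)
next
  case (Pred p t)
  then have "tval (\<pi> \<circ> e) t = \<pi> (tval e t)" by (auto intro: tval_comp)
  then show ?case using Pred.prems(2)[of p "tval e t"] by (simp only: sat.simps) simp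
next
  case (Neg \<phi>)
  have "sat U (\<pi> \<circ> e) \<phi> = sat U e \<phi>" using Neg.prems by (intro Neg.IH) auto
  then show ?case by (simp only: sat.simps)
next
  case (Conj \<phi> \<psi>)
  have "sat U (\<pi> \<circ> e) \<phi> = sat U e \<phi>" using Conj.prems by (intro Conj.IH(1)) auto
  moreover have "sat U (\<pi> \<circ> e) \<psi> = sat U e \<psi>" using Conj.prems by (intro Conj.IH(2)) auto
  ultimately show ?case by (simp only: sat.simps)
next
  case (Ex x \<phi>)
  have upd: "(\<pi> \<circ> e)(x := c) = \<pi> \<circ> e(x := inv \<pi> c)" for c
    using surj_f_inv_f[OF bij_is_surj[OF assms(1)]] by (auto simp: fun_eq_iff)
  have "sat U ((\<pi> \<circ> e)(x := c)) \<phi> = sat U (e(x := inv \<pi> c)) \<phi>" for c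
    unfolding upd using Ex.prems by (intro Ex.IH) auto
  moreover have "(\<exists>c. sat U (e(x := inv \<pi> c)) \<phi>) \<longleftrightarrow> (\<exists>d. sat U (e(x := d)) \<phi>)"
  proof
    assume "\<exists>d. sat U (e(x := d)) \<phi>"
    then obtain d where "sat U (e(x := inv \<pi> (\<pi> d))) \<phi>"
      using inv_f_f[OF bij_is_inj[OF assms(1)]] by auto
    then show "\<exists>c. sat U (e(x := inv \<pi> c)) \<phi>" ..
  qed blast
  ultimately show ?case by (simp only: sat.simps)
qed

lemma definable_closed_under_bij:
  assumes "fv \<phi> \<subseteq> {..<k}"
    and "xs \<in> {xs \<in> tuples k. sat U (\<lambda>i. xs ! i) \<phi>}"
    and "bij \<pi>"
    and "\<And>a. a \<in> params \<phi> \<Longrightarrow> \<pi> a = a"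
    and "\<And>p x. p \<in> preds \<phi> \<Longrightarrow> \<pi> x \<in> U p \<longleftrightarrow> x \<in> U p"
  shows "map \<pi> xs \<in> {xs \<in> tuples k. sat U (\<lambda>i. xs ! i) \<phi>}"
proof -
  have len: "length xs = k" using assms(2) by (simp add: tuples_def)
  have "sat U (\<lambda>i. map \<pi> xs ! i) \<phi> = sat U (\<pi> \<circ> (\<lambda>i. xs ! i)) \<phi>"
    using assms(1) len by (intro sat_cong) auto
  also have "\<dots> = sat U (\<lambda>i. xs ! i) \<phi>"
    using sat_comp_bij[OF assms(3-5)] .
  finally show ?thesis using assms(2) by (simp add: tuples_def)
qed

lemma definable_closed_under_transpose:
  assumes "fv \<phi> \<subseteq> {..<k}"
    and "xs \<in> {xs \<in> tuples k. sat U (\<lambda>i. xs ! i) \<phi>}"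
    and "a \<notin> params \<phi>" and "a' \<notin> params \<phi>"
    and "\<And>p. p \<in> preds \<phi> \<Longrightarrow> a \<in> U p \<longleftrightarrow> a' \<in> U p"
  shows "map (transpose a a') xs \<in> {xs \<in> tuples k. sat U (\<lambda>i. xs ! i) \<phi>}"
proof (rule definable_closed_under_bij[OF assms(1,2)])
  show "transpose a a' c = c" if "c \<in> params \<phi>" for c
  proof -
    have "c \<noteq> a" "c \<noteq> a'" using that assms(3,4) by auto
    then show ?thesis by simp
  qed
  show "transpose a a' x \<in> U p \<longleftrightarrow> x \<in> U p" if "p \<in> preds \<phi>" for p x
    using assms(5)[OF that] by (cases "x = a"; cases "x = a'") auto
qed simp

lemma finite_elements_of_finite_fibre:
  assumes "finite (range f)"
  shows "finite {x. finite (f -` {f x})}"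
proof (rule finite_subset)
  show "{x. finite (f -` {f x})} \<subseteq> \<Union> ((\<lambda>y. f -` {y}) ` {y \<in> range f. finite (f -` {y})})"
    by auto
  show "finite (\<Union> ((\<lambda>y. f -` {y}) ` {y \<in> range f. finite (f -` {y})}))"
    using assms by auto
qed

lemma exists_other_element_if_not_diag:
  assumes "xs \<notin> diag (length xs)" and "a \<in> set xs"
  obtains b where "b \<in> set xs" and "b \<noteq> a"
proof -
  have "xs \<noteq> replicate (length xs) a" using assms(1) by (auto simp: diag_def)
  then show thesis using that replicate_eqI[of xs "length xs" a] by blast
qed

lemma definable_finite_occurrences_imp_finite_off_diag:
  assumes fv: "fv \<phi> \<subseteq> {..<k}"
    and Y: "Y = {xs \<in> tuples k. sat U (\<lambda>i. xs ! i) \<phi>}"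
    and occ: "\<And>b. finite {t \<in> Y. b \<in> set t}"
  shows "finite (Y - diag k)"
proof -
  define type where "type x = {p \<in> preds \<phi>. x \<in> U p}" for x
  define F where "F = params \<phi> \<union> {x. finite (type -` {type x})}"
  have "finite (range type)"
    by (rule finite_subset[of _ "Pow (preds \<phi>)"]) (auto simp: type_def finite_preds)
  then have "finite F"
    unfolding F_def using finite_params finite_elements_of_finite_fibre by blast
  have "set t \<subseteq> F" if t: "t \<in> Y - diag k" for t
  proof (rule ccontr)
    assume "\<not> set t \<subseteq> F"
    then obtain a where a: "a \<in> set t" "a \<notin> F" by blast
    have len: "length t = k" using t Y by (simp add: tuples_def)
    obtain b where b: "b \<in> set t" "b \<noteq> a"
      using exists_other_element_if_not_diag[of t a] t a(1) len by blast
    define S where "S = type -` {type a} - params \<phi> - set t"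
    have "infinite S"
      using a(2) unfolding S_def F_def by (simp add: finite_params)
    moreover have "S \<subseteq> \<Union> (set ` {u \<in> Y. b \<in> set u})"
    proof
      fix a' assume a': "a' \<in> S"
      have "a \<in> U p \<longleftrightarrow> a' \<in> U p" if "p \<in> preds \<phi>" for p
        using a' that unfolding S_def type_def by blast
      then have "map (transpose a a') t \<in> Y"
        using t a(2) a' unfolding Y
        by (intro definable_closed_under_transpose[OF fv]) (auto simp: S_def F_def)
      moreover have "transpose a a' b = b"
        using b a' by (metis DiffD2 S_def transpose_apply_other)
      then have "b \<in> set (map (transpose a a') t)"
        using b(1) by (metis image_eqI set_map)
      moreover have "a' \<in> set (map (transpose a a') t)"
        using a(1) by (metis image_eqI set_map transpose_apply_first)
      ultimately show "a' \<in> \<Union> (set ` {u \<in> Y. b \<in> set u})" by blast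
    qed
    moreover have "finite (\<Union> (set ` {u \<in> Y. b \<in> set u}))"
      using occ by auto
    ultimately show False using finite_subset by blast
  qed
  then have "Y - diag k \<subseteq> {xs. set xs \<subseteq> F \<and> length xs = k}"
    using Y by (auto simp: tuples_def)
  then show ?thesis
    using finite_lists_length_eq[OF \<open>finite F\<close>] finite_subset by blast
qed

definition conj_list :: "'a fm list \<Rightarrow> 'a fm" where
  "conj_list \<phi>s = foldr Conj \<phi>s (Eq (Var 0) (Var 0))"

definition disj :: "'a fm \<Rightarrow> 'a fm \<Rightarrow> 'a fm" where
  "disj \<phi> \<psi> = Neg (Conj (Neg \<phi>) (Neg \<psi>))"

definition disj_list :: "'a fm list \<Rightarrow> 'a fm" where
  "disj_list \<phi>s = foldr disj \<phi>s (Neg (Eq (Var 0) (Var 0)))"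

lemma sat_conj_list: "sat U e (conj_list \<phi>s) \<longleftrightarrow> (\<forall>\<phi> \<in> set \<phi>s. sat U e \<phi>)"
  by (induction \<phi>s) (auto simp: conj_list_def)

lemma sat_disj_list: "sat U e (disj_list \<phi>s) \<longleftrightarrow> (\<exists>\<phi> \<in> set \<phi>s. sat U e \<phi>)"
  by (induction \<phi>s) (auto simp: disj_list_def disj_def)

lemma fv_conj_list: "fv (conj_list \<phi>s) = {0} \<union> \<Union> (fv ` set \<phi>s)"
  by (induction \<phi>s) (auto simp: conj_list_def)

lemma fv_disj_list: "fv (disj_list \<phi>s) = {0} \<union> \<Union> (fv ` set \<phi>s)"
  by (induction \<phi>s) (auto simp: disj_list_def disj_def)

definition tuple_fm :: "'a list \<Rightarrow> 'a fm" where
  "tuple_fm t = conj_list (map (\<lambda>i. Eq (Var i) (Par (t ! i))) [0..<length t])"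

definition diag_fm :: "nat \<Rightarrow> nat \<Rightarrow> 'a fm" where
  "diag_fm k p = Conj (conj_list (map (\<lambda>i. Eq (Var 0) (Var i)) [0..<k])) (Pred p (Var 0))"

lemma fv_tuple_fm: "0 < length t \<Longrightarrow> fv (tuple_fm t) = {..<length t}"
  by (auto simp: tuple_fm_def fv_conj_list)

lemma fv_diag_fm: "0 < k \<Longrightarrow> fv (diag_fm k p) = {..<k}"
  by (auto simp: diag_fm_def fv_conj_list)

lemma sat_tuple_fm:
  "length xs = length t \<Longrightarrow> sat U (\<lambda>i. xs ! i) (tuple_fm t) \<longleftrightarrow> xs = t"
  by (auto simp: tuple_fm_def sat_conj_list intro: nth_equalityI)

lemma sat_diag_fm:
  assumes "length xs = k" and "0 < k"
  shows "sat U (\<lambda>i. xs ! i) (diag_fm k p) \<longleftrightarrow> (\<exists>a \<in> U p. xs = replicate k a)"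
proof
  assume "sat U (\<lambda>i. xs ! i) (diag_fm k p)"
  then have "xs = replicate k (xs ! 0)" "xs ! 0 \<in> U p"
    using assms(1) by (auto simp: diag_fm_def sat_conj_list intro: nth_equalityI)
  then show "\<exists>a \<in> U p. xs = replicate k a" by blast
next
  assume "\<exists>a \<in> U p. xs = replicate k a"
  then obtain a where "a \<in> U p" "xs = replicate k a" by blast
  then show "sat U (\<lambda>i. xs ! i) (diag_fm k p)"
    using assms(2) by (auto simp: diag_fm_def sat_conj_list)
qed

lemma finite_off_diag_imp_monadically_definable:
  assumes "0 < k" and "Y \<subseteq> tuples k" and "finite (Y - diag k)"
  shows "monadically_definable k Y"
proof -
  obtain L where L: "set L = Y - diag k" using finite_list[OF assms(3)] by blast
  define U :: "nat \<Rightarrow> 'a set" where "U = (\<lambda>_. {a. replicate k a \<in> Y})"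
  define \<phi> where "\<phi> = disj (diag_fm k 0) (disj_list (map tuple_fm L))"
  have len_L: "length t = k" if "t \<in> set L" for t
    using that L assms(2) by (auto simp: tuples_def)
  have fv: "fv \<phi> \<subseteq> {..<k}"
    using assms(1) len_L by (auto simp: \<phi>_def disj_def fv_disj_list fv_diag_fm fv_tuple_fm)
  have Y_iff: "xs \<in> Y \<longleftrightarrow> sat U (\<lambda>i. xs ! i) \<phi>" if "xs \<in> tuples k" for xs
  proof -
    have len: "length xs = k" using that by (simp add: tuples_def)
    have "sat U (\<lambda>i. xs ! i) \<phi> \<longleftrightarrow>
        sat U (\<lambda>i. xs ! i) (diag_fm k 0) \<or> (\<exists>t \<in> set L. sat U (\<lambda>i. xs ! i) (tuple_fm t))"
      by (simp add: \<phi>_def disj_def sat_disj_list)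
    also have "\<dots> \<longleftrightarrow> (\<exists>a. replicate k a \<in> Y \<and> xs = replicate k a) \<or> xs \<in> set L"
      using len_L len by (simp add: sat_diag_fm[OF len assms(1)] sat_tuple_fm U_def)
    also have "\<dots> \<longleftrightarrow> xs \<in> Y"
      unfolding L diag_def by blast
    finally show ?thesis by (rule sym)
  qed
  have "Y = {xs \<in> tuples k. sat U (\<lambda>i. xs ! i) \<phi>}"
    using assms(2) Y_iff by auto
  with fv show ?thesis
    unfolding monadically_definable_def by (intro exI conjI)
qed

theorem lemma4p3:
  fixes Y :: "'a list set" and k :: nat
  assumes "infinite (UNIV :: 'a set)"
    and "k \<ge> 2"
    and "Y \<subseteq> tuples k"
    and "mutually_algebraic Y"
  shows "monadically_definable k Y \<longleftrightarrow> finite (Y - diag k)"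
proof
  assume "monadically_definable k Y"
  then obtain U and \<phi> :: "'a fm"
    where "fv \<phi> \<subseteq> {..<k}" and "Y = {xs \<in> tuples k. sat U (\<lambda>i. xs ! i) \<phi>}"
    unfolding monadically_definable_def by blast
  moreover have "finite {t \<in> Y. b \<in> set t}" for b
    using assms(4) by (auto simp: mutually_algebraic_def)
  ultimately show "finite (Y - diag k)"
    by (rule definable_finite_occurrences_imp_finite_off_diag)
next
  \<comment> \<open>neither direction uses \<open>infinite UNIV\<close>; this one only needs \<open>k > 0\<close>\<close>
  assume "finite (Y - diag k)"
  then show "monadically_definable k Y"
    using assms(2,3) by (intro finite_off_diag_imp_monadically_definable) auto
qed

end
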